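(* Let $G$ be a $\lambda$-graph and $Q$ a query over $G$. Then $Q^{\Downarrow}$ is an open bisimulation if and only if $[n]=[m]$ for all nodes $n,m$ with $n\,Q\,m$.
   Context: A pre-$\lambda$-graph is a directed graph whose nodes are of four kinds: an application node $@(n_1,n_2)$ has exactly two children, its left child $n_1$ and its right child $n_2$; an abstraction node $\lambda(n)$ has exactly one child, its body $n$; a free variable node has no children and carries an atom $\mathrm{id}(n)$ from a fixed set of atoms, distinct free variable nodes carrying distinct atoms; a bound variable node $\mathrm{var}(l)$ has exactly one outgoing binding edge, to an abstraction node $l$ (its binder). Letters $l,l'$ denote abstraction nodes. A trace is a finite sequence of directions from $\{\swarrow,\downarrow,\searrow\}$; $\epsilon$ is the empty trace and $d\cdot\tau$ is the trace $\tau$ extended by one final step $d$. Paths $n\xrightarrow{\tau}m$ are defined inductively: $n\xrightarrow{\epsilon}n$; if $n\xrightarrow{\tau}\lambda(m)$ then $n\xrightarrow{\downarrow\cdot\tau}m$; if $n\xrightarrow{\tau}@(m_1,m_2)$ then $n\xrightarrow{\swarrow\cdot\tau}m_1$ and $n\xrightarrow{\searrow\cdot\tau}m_2$ (binding edges are never followed). We write $n\xrightarrow{\tau}$ if $n\xrightarrow{\tau}m$ for some $m$. The path $n\xrightarrow{\tau}$ crosses a node $m$ if either $n\xrightarrow{\tau}m$, or $\tau=d\cdot\tau'$ and $n\xrightarrow{\tau'}$ crosses $m$. A root is a node $r$ such that the only path ending in $r$ has the empty trace. A node $m$ dominates $n$ if every path from a root to $n$ crosses $m$. A $\lambda$-graph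 is a pre-$\lambda$-graph that has finitely many nodes, is acyclic ($n\xrightarrow{\tau}n$ holds only for $\tau=\epsilon$), and is dominated (every bound variable node $\mathrm{var}(l)$ is dominated by its binder $l$). Two nodes are homogeneous if both are application nodes, or both abstraction nodes, or both free variable nodes, or both bound variable nodes; a binary relation $R$ on nodes is homogeneous if it only relates homogeneous nodes. Rules: $(\swarrow)$: $@(n_1,n_2)\,R\,@(m_1,m_2)$ implies $n_1\,R\,m_1$; $(\searrow)$: $@(n_1,n_2)\,R\,@(m_1,m_2)$ implies $n_2\,R\,m_2$; $(\downarrow)$: $\lambda(n)\,R\,\lambda(m)$ implies $n\,R\,m$; $(\circlearrowright)$: $\mathrm{var}(n)\,R\,\mathrm{var}(m)$ implies $n\,R\,m$. $R$ is propagated if closed under $(\swarrow),(\downarrow),(\searrow)$. $R$ is open if $n\,R\,m$ implies $n=m$ for all free variable nodes $n,m$. A bisimulation is a homogeneous propagated relation closed also under $(\circlearrowright)$. $R^{\Downarrow}$ (propagation) is the smallest propagated relation containing $R$. A query over $G$ is a binary relation on the roots of $G$. Readback. Locally nameless terms: $t::=\underline{k}\mid \mathsf{x}\mid t\,s\mid \lambda.t$ with $k\in\mathbb N$ (bound variable as de Bruijn index) and $\mathsf{x}$ an atom (free variable); equality is syntactic. For a path $n\xrightarrow{\tau}$ crossing an abstraction node $l$, the index $\mathrm{idx}(l,n\xrightarrow{\tau})$ is defined by induction on the crossing: it is $0$ if $n\xrightarrow{\tau}l$; for $n\xrightarrow{d\cdot\tau}l'$ with $l'$ an abstraction node different from $l$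 it is $\mathrm{idx}(l,n\xrightarrow{\tau})+1$; for $n\xrightarrow{d\cdot\tau}m$ with $m$ not an abstraction node it is $\mathrm{idx}(l,n\xrightarrow{\tau})$. For a root $r$ and a path $r\xrightarrow{\tau}n$, the readback $[r\xrightarrow{\tau}n]$ is: $\underline{\mathrm{idx}(l,r\xrightarrow{\tau})}$ if $n=\mathrm{var}(l)$ (well defined by domination); $\mathrm{id}(n)$ if $n$ is a free variable node; $\lambda.[r\xrightarrow{\downarrow\cdot\tau}m]$ if $n=\lambda(m)$; $[r\xrightarrow{\swarrow\cdot\tau}n_1]\,[r\xrightarrow{\searrow\cdot\tau}n_2]$ if $n=@(n_1,n_2)$. For a root $r$, $[r]:=[r\xrightarrow{\epsilon}r]$. *)

theory Defs
  imports Main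
begin

datatype ('n, 'a) kind =
    App 'n 'n
  | Abs 'n
  | FVar 'a
  | BVar 'n        (* bound variable node var(l), binding edge to l *)

datatype dir = DL | DD | DR   (* south-west, down, south-east *)

text \<open>Traces: the list head is the LAST step, i.e. d # tau is the trace tau
  extended by the final step d.\<close>
type_synonym trace = "dir list"

definition is_abs :: "('n,'a) kind \<Rightarrow> bool" where
  "is_abs k = (\<exists>m. k = Abs m)"

definition pre_lambda_graph :: "'n set \<Rightarrow> ('n \<Rightarrow> ('n,'a) kind) \<Rightarrow> bool" where
  "pre_lambda_graph N lab \<longleftrightarrow>
     (\<forall>n\<in>N. \<forall>n1 n2. lab n = App n1 n2 \<longrightarrow> n1 \<in> N \<and> n2 \<in> N) \<and>
     (\<forall>n\<in>N. \<forall>m. lab n = Abs m \<longrightarrow> m \<in> N) \<and>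
     (\<forall>n\<in>N. \<forall>l. lab n = BVar l \<longrightarrow> l \<in> N \<and> is_abs (lab l)) \<and>
     (\<forall>n\<in>N. \<forall>m\<in>N. \<forall>a. lab n = FVar a \<and> lab m = FVar a \<longrightarrow> n = m)"

inductive path :: "('n \<Rightarrow> ('n,'a) kind) \<Rightarrow> 'n \<Rightarrow> trace \<Rightarrow> 'n \<Rightarrow> bool"
  for lab where
  path_eps: "path lab n [] n"
| path_abs: "path lab n \<tau> m \<Longrightarrow> lab m = Abs m' \<Longrightarrow> path lab n (DD # \<tau>) m'"
| path_appL: "path lab n \<tau> m \<Longrightarrow> lab m = App m1 m2 \<Longrightarrow> path lab n (DL # \<tau>) m1"
| path_appR: "path lab n \<tau> m \<Longrightarrow> lab m = App m1 m2 \<Longrightarrow> path lab n (DR # \<tau>) m2"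

fun crosses :: "('n \<Rightarrow> ('n,'a) kind) \<Rightarrow> 'n \<Rightarrow> trace \<Rightarrow> 'n \<Rightarrow> bool" where
  "crosses lab n [] m = path lab n [] m"
| "crosses lab n (d # \<tau>) m = (path lab n (d # \<tau>) m \<or> crosses lab n \<tau> m)"

definition is_root :: "'n set \<Rightarrow> ('n \<Rightarrow> ('n,'a) kind) \<Rightarrow> 'n \<Rightarrow> bool" where
  "is_root N lab r \<longleftrightarrow> r \<in> N \<and> (\<forall>n\<in>N. \<forall>\<tau>. path lab n \<tau> r \<longrightarrow> \<tau> = [])"

definition dominates :: "'n set \<Rightarrow> ('n \<Rightarrow> ('n,'a) kind) \<Rightarrow> 'n \<Rightarrow> 'n \<Rightarrow> bool" where
  "dominates N lab m n \<longleftrightarrow>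
     (\<forall>r \<tau>. is_root N lab r \<and> path lab r \<tau> n \<longrightarrow> crosses lab r \<tau> m)"

definition lambda_graph :: "'n set \<Rightarrow> ('n \<Rightarrow> ('n,'a) kind) \<Rightarrow> bool" where
  "lambda_graph N lab \<longleftrightarrow>
     pre_lambda_graph N lab \<and> finite N \<and>
     (\<forall>n\<in>N. \<forall>\<tau>. path lab n \<tau> n \<longrightarrow> \<tau> = []) \<and>
     (\<forall>n\<in>N. \<forall>l. lab n = BVar l \<longrightarrow> dominates N lab l n)"

fun homog_kind :: "('n,'a) kind \<Rightarrow> ('n,'a) kind \<Rightarrow> bool" where
  "homog_kind (App _ _) (App _ _) = True"
| "homog_kind (Abs _) (Abs _) = True"
| "homog_kind (FVar _) (FVar _) = True"
| "homog_kind (BVar _) (BVar _) = True"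
| "homog_kind _ _ = False"

definition homogeneous :: "('n \<Rightarrow> ('n,'a) kind) \<Rightarrow> ('n \<times> 'n) set \<Rightarrow> bool" where
  "homogeneous lab R \<longleftrightarrow> (\<forall>(n, m) \<in> R. homog_kind (lab n) (lab m))"

definition propagated :: "('n \<Rightarrow> ('n,'a) kind) \<Rightarrow> ('n \<times> 'n) set \<Rightarrow> bool" where
  "propagated lab R \<longleftrightarrow>
     (\<forall>n m n1 n2 m1 m2. (n, m) \<in> R \<and> lab n = App n1 n2 \<and> lab m = App m1 m2
        \<longrightarrow> (n1, m1) \<in> R \<and> (n2, m2) \<in> R) \<and>
     (\<forall>n m n' m'. (n, m) \<in> R \<and> lab n = Abs n' \<and> lab m = Abs m' \<longrightarrow> (n', m') \<in> R)"

definition open_rel :: "('n \<Rightarrow> ('n,'a) kind) \<Rightarrow> ('n \<times> 'n) set \<Rightarrow> bool" where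
  "open_rel lab R \<longleftrightarrow>
     (\<forall>n m a b. (n, m) \<in> R \<and> lab n = FVar a \<and> lab m = FVar b \<longrightarrow> n = m)"

definition bisimulation :: "('n \<Rightarrow> ('n,'a) kind) \<Rightarrow> ('n \<times> 'n) set \<Rightarrow> bool" where
  "bisimulation lab R \<longleftrightarrow> homogeneous lab R \<and> propagated lab R \<and>
     (\<forall>n m l l'. (n, m) \<in> R \<and> lab n = BVar l \<and> lab m = BVar l' \<longrightarrow> (l, l') \<in> R)"

text \<open>Propagation R^Downarrow: the smallest propagated relation containing R.\<close>
inductive_set propagation :: "('n \<Rightarrow> ('n,'a) kind) \<Rightarrow> ('n \<times> 'n) set \<Rightarrow> ('n \<times> 'n) set"
  for lab R where
  prop_base: "(n, m) \<in> R \<Longrightarrow> (n, m) \<in> propagation lab R"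
| prop_L: "(n, m) \<in> propagation lab R \<Longrightarrow> lab n = App n1 n2 \<Longrightarrow> lab m = App m1 m2
            \<Longrightarrow> (n1, m1) \<in> propagation lab R"
| prop_R: "(n, m) \<in> propagation lab R \<Longrightarrow> lab n = App n1 n2 \<Longrightarrow> lab m = App m1 m2
            \<Longrightarrow> (n2, m2) \<in> propagation lab R"
| prop_D: "(n, m) \<in> propagation lab R \<Longrightarrow> lab n = Abs n' \<Longrightarrow> lab m = Abs m'
            \<Longrightarrow> (n', m') \<in> propagation lab R"

definition is_query :: "'n set \<Rightarrow> ('n \<Rightarrow> ('n,'a) kind) \<Rightarrow> ('n \<times> 'n) set \<Rightarrow> bool" where
  "is_query N lab Q \<longleftrightarrow> (\<forall>(n, m) \<in> Q. is_root N lab n \<and> is_root N lab m)"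

datatype 'a lnterm = BV nat | FV 'a | Ap "'a lnterm" "'a lnterm" | Lam "'a lnterm"

text \<open>idx l (n --tau-->), meaningful when the path crosses the abstraction l.\<close>
fun idx :: "('n \<Rightarrow> ('n,'a) kind) \<Rightarrow> 'n \<Rightarrow> 'n \<Rightarrow> trace \<Rightarrow> nat" where
  "idx lab l n [] = 0"
| "idx lab l n (d # \<tau>) =
     (if path lab n (d # \<tau>) l then 0
      else if (\<exists>l'. path lab n (d # \<tau>) l' \<and> is_abs (lab l')) then Suc (idx lab l n \<tau>)
      else idx lab l n \<tau>)"

text \<open>rb lab r tau t: the readback [r --tau--> n] (n the target of the path) is t.\<close>
inductive rb :: "('n \<Rightarrow> ('n,'a) kind) \<Rightarrow> 'n \<Rightarrow> trace \<Rightarrow> 'a lnterm \<Rightarrow> bool"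
  for lab where
  rb_bvar: "path lab r \<tau> n \<Longrightarrow> lab n = BVar l \<Longrightarrow> rb lab r \<tau> (BV (idx lab l r \<tau>))"
| rb_fvar: "path lab r \<tau> n \<Longrightarrow> lab n = FVar a \<Longrightarrow> rb lab r \<tau> (FV a)"
| rb_abs: "path lab r \<tau> n \<Longrightarrow> lab n = Abs m \<Longrightarrow> rb lab r (DD # \<tau>) t
            \<Longrightarrow> rb lab r \<tau> (Lam t)"
| rb_app: "path lab r \<tau> n \<Longrightarrow> lab n = App n1 n2 \<Longrightarrow> rb lab r (DL # \<tau>) t1
            \<Longrightarrow> rb lab r (DR # \<tau>) t2 \<Longrightarrow> rb lab r \<tau> (Ap t1 t2)"

definition readback :: "('n \<Rightarrow> ('n,'a) kind) \<Rightarrow> 'n \<Rightarrow> 'a lnterm" where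
  "readback lab r = (THE t. rb lab r [] t)"

end

theory Submission
  imports Defs "HOL-Library.Sublist"
begin

text \<open>Two nodes are related by \<open>Q\<^sup>\<Down>\<close> exactly when they are reached by the same trace from
  two roots related by \<open>Q\<close>. If related roots have the same readback, the readbacks at every
  common trace agree, which gives homogeneity and openness; at bound variables, equal indices
  force the two binders to sit at the same trace, since an index counts the abstractions passed
  between binder and variable and both roots have abstractions at the same traces.

  Conversely, an open bisimulation relates the nodes reached by any common trace, so the
  readbacks agree everywhere except possibly at bound variables. There the binders are related
  and must lie at the same trace: otherwise one binder is a proper descendant of a node related
  to the other, and pushing this configuration through the propagated relation over and over
  yields arbitrarily long paths in a finite acyclic graph.\<close>

fun child :: "('n, 'a) kind \<Rightarrow> dir \<Rightarrow> 'n \<Rightarrow> bool" where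
  "child (App n1 _) DL m \<longleftrightarrow> m = n1"
| "child (App _ n2) DR m \<longleftrightarrow> m = n2"
| "child (Abs n) DD m \<longleftrightarrow> m = n"
| "child _ _ _ \<longleftrightarrow> False"

lemma child_functional: "child k d m \<Longrightarrow> child k d m' \<Longrightarrow> m = m'"
  by (cases k; cases d) auto

lemma path_Nil_iff [simp]: "path lab n [] m \<longleftrightarrow> m = n"
  by (auto elim: path.cases intro: path.intros)

lemma path_Cons_iff: "path lab n (d # \<tau>) m \<longleftrightarrow> (\<exists>k. path lab n \<tau> k \<and> child (lab k) d m)"
proof
  assume "path lab n (d # \<tau>) m"
  then show "\<exists>k. path lab n \<tau> k \<and> child (lab k) d m"
    by (cases rule: path.cases) auto
next
  assume "\<exists>k. path lab n \<tau> k \<and> child (lab k) d m"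
  then obtain k where k: "path lab n \<tau> k" and "child (lab k) d m" by blast
  then show "path lab n (d # \<tau>) m"
    by (cases "lab k"; cases d) (auto intro: path.intros(2-4)[OF k])
qed

lemma path_functional: "path lab n \<tau> m \<Longrightarrow> path lab n \<tau> m' \<Longrightarrow> m = m'"
proof (induction \<tau> arbitrary: m m')
  case (Cons d \<tau>)
  then obtain k k' where "path lab n \<tau> k" "child (lab k) d m"
    and "path lab n \<tau> k'" "child (lab k') d m'"
    by (auto simp: path_Cons_iff)
  then show ?case using Cons.IH child_functional by metis
qed simp

lemma path_append_iff: "path lab n (\<sigma> @ \<rho>) m \<longleftrightarrow> (\<exists>x. path lab n \<rho> x \<and> path lab x \<sigma> m)"
proof (induction \<sigma> arbitrary: m)
  case (Cons d \<sigma>)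
  show ?case by (simp only: append_Cons path_Cons_iff Cons.IH) blast
qed simp

lemma child_in_carrier:
  assumes G: "pre_lambda_graph N lab" and k: "k \<in> N" and m: "child (lab k) d m"
  shows "m \<in> N"
proof (cases "lab k")
  case (App n1 n2)
  then have "n1 \<in> N \<and> n2 \<in> N" using G k unfolding pre_lambda_graph_def by blast
  then show ?thesis using m App by (cases d) auto
next
  case (Abs n)
  then have "n \<in> N" using G k unfolding pre_lambda_graph_def by blast
  then show ?thesis using m Abs by (cases d) auto
qed (use m in auto)

lemma path_in_carrier: "pre_lambda_graph N lab \<Longrightarrow> n \<in> N \<Longrightarrow> path lab n \<tau> m \<Longrightarrow> m \<in> N"
proof (induction \<tau> arbitrary: m)
  case (Cons d \<tau>)
  then obtain k where k: "path lab n \<tau> k" "child (lab k) d m" by (auto simp: path_Cons_iff)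
  show ?case using child_in_carrier[OF Cons.prems(1) Cons.IH[OF Cons.prems(1,2) k(1)] k(2)] .
qed simp

lemma lambda_graph_pre: "lambda_graph N lab \<Longrightarrow> pre_lambda_graph N lab"
  and lambda_graph_finite: "lambda_graph N lab \<Longrightarrow> finite N"
  by (simp_all add: lambda_graph_def)

lemma lambda_graph_acyclic:
  assumes "lambda_graph N lab" and "n \<in> N" and "path lab n \<tau> n"
  shows "\<tau> = []"
proof -
  have "\<forall>n\<in>N. \<forall>\<tau>. path lab n \<tau> n \<longrightarrow> \<tau> = []"
    using assms(1) unfolding lambda_graph_def by (elim conjE)
  then show ?thesis using assms(2,3) by blast
qed

lemma lambda_graph_dominated:
  assumes "lambda_graph N lab" and "n \<in> N" and "lab n = BVar l"
  shows "dominates N lab l n"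
proof -
  have "\<forall>n\<in>N. \<forall>l. lab n = BVar l \<longrightarrow> dominates N lab l n"
    using assms(1) unfolding lambda_graph_def by (elim conjE)
  then show ?thesis using assms(2,3) by blast
qed

definition descendants :: "('n \<Rightarrow> ('n, 'a) kind) \<Rightarrow> 'n \<Rightarrow> 'n set" where
  "descendants lab n = {m. \<exists>\<tau>. path lab n \<tau> m}"

lemma self_in_descendants: "n \<in> descendants lab n"
  unfolding descendants_def by (blast intro: path_eps)

lemma descendants_subset_carrier:
  "pre_lambda_graph N lab \<Longrightarrow> n \<in> N \<Longrightarrow> descendants lab n \<subseteq> N"
  unfolding descendants_def by (blast dest: path_in_carrier)

lemma descendants_psubset:
  assumes G: "lambda_graph N lab" and n: "n \<in> N" and p: "path lab n \<tau> m" and ne: "\<tau> \<noteq> []"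
  shows "descendants lab m \<subset> descendants lab n"
proof -
  have sub: "descendants lab m \<subseteq> descendants lab n"
  proof
    fix x assume "x \<in> descendants lab m"
    then obtain \<sigma> where "path lab m \<sigma> x" unfolding descendants_def by blast
    then have "path lab n (\<sigma> @ \<tau>) x" using path_append_iff[of lab n \<sigma> \<tau> x] p by blast
    then show "x \<in> descendants lab n" unfolding descendants_def by blast
  qed
  have "n \<notin> descendants lab m"
  proof
    assume "n \<in> descendants lab m"
    then obtain \<sigma> where "path lab m \<sigma> n" unfolding descendants_def by blast
    then have "path lab n (\<sigma> @ \<tau>) n" using path_append_iff[of lab n \<sigma> \<tau> n] p by blast
    then show False using lambda_graph_acyclic[OF G n] ne by blast
  qed
  then show ?thesis using sub self_in_descendants[of n lab] by blast
qed

lemma path_length_less_card: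
  assumes G: "lambda_graph N lab" and n: "n \<in> N" and p: "path lab n \<tau> m"
  shows "length \<tau> < card N"
proof -
  have pre: "pre_lambda_graph N lab" and fin: "finite N"
    using lambda_graph_pre[OF G] lambda_graph_finite[OF G] .
  have desc_fin: "finite (descendants lab x)" if "x \<in> N" for x
    using finite_subset[OF descendants_subset_carrier[OF pre that] fin] .
  have "length \<tau> + card (descendants lab m) \<le> card (descendants lab n)" using p
  proof (induction \<tau> arbitrary: m)
    case (Cons d \<tau>)
    then obtain k where k: "path lab n \<tau> k" "child (lab k) d m" by (auto simp: path_Cons_iff)
    have kN: "k \<in> N" using path_in_carrier[OF pre n k(1)] .
    have "path lab k [d] m" using k(2) by (auto simp: path_Cons_iff)
    then have "descendants lab m \<subset> descendants lab k" using descendants_psubset[OF G kN] by blast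
    then have "card (descendants lab m) < card (descendants lab k)"
      by (rule psubset_card_mono[OF desc_fin[OF kN]])
    then show ?case using Cons.IH[OF k(1)] by simp
  qed simp
  moreover have "0 < card (descendants lab m)"
    using desc_fin[OF path_in_carrier[OF pre n p]] self_in_descendants[of m lab] card_gt_0_iff
    by blast
  moreover have "card (descendants lab n) \<le> card N"
    using card_mono[OF fin descendants_subset_carrier[OF pre n]] .
  ultimately show ?thesis by linarith
qed

lemma crosses_iff_suffix: "crosses lab n \<tau> m \<longleftrightarrow> (\<exists>\<rho>. suffix \<rho> \<tau> \<and> path lab n \<rho> m)"
  by (induction \<tau>) (auto simp: suffix_Cons)

lemma root_in_carrier: "is_root N lab r \<Longrightarrow> r \<in> N"
  by (simp add: is_root_def)

lemma root_path_in_carrier: "lambda_graph N lab \<Longrightarrow> is_root N lab r \<Longrightarrow> path lab r \<tau> n \<Longrightarrow> n \<in> N"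
  using path_in_carrier[OF lambda_graph_pre _ ] root_in_carrier by metis

lemma binder_on_path:
  assumes G: "lambda_graph N lab" and r: "is_root N lab r" and n: "path lab r \<tau> n"
    and l: "lab n = BVar l"
  shows "\<exists>\<rho>. suffix \<rho> \<tau> \<and> path lab r \<rho> l"
proof -
  have "n \<in> N" using root_path_in_carrier[OF G r n] .
  then have "dominates N lab l n" using lambda_graph_dominated[OF G _ l] by blast
  then show ?thesis using r n unfolding dominates_def crosses_iff_suffix by blast
qed

lemma binder_is_abs:
  assumes "lambda_graph N lab" and "n \<in> N" and "lab n = BVar l"
  shows "is_abs (lab l)"
  using lambda_graph_pre[OF assms(1)] assms(2,3) unfolding pre_lambda_graph_def by blast

lemma pre_lambda_graph_FVar_inj:
  assumes "pre_lambda_graph N lab" and "n \<in> N" and "m \<in> N" and "lab n = FVar a" and "lab m = FVar a"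
  shows "n = m"
proof -
  have "\<forall>n\<in>N. \<forall>m\<in>N. \<forall>a. lab n = FVar a \<and> lab m = FVar a \<longrightarrow> n = m"
    using assms(1) unfolding pre_lambda_graph_def by (elim conjE)
  then show ?thesis using assms(2-5) by blast
qed

section \<open>Transferring paths along propagated relations\<close>

lemma homog_kind_sym: "homog_kind k k' \<Longrightarrow> homog_kind k' k"
  by (cases k; cases k') auto

lemma homog_kind_child: "homog_kind k k' \<Longrightarrow> child k d m \<Longrightarrow> \<exists>m'. child k' d m'"
  by (cases k; cases k'; cases d) auto

lemma homog_kind_is_abs: "homog_kind k k' \<Longrightarrow> is_abs k \<longleftrightarrow> is_abs k'"
  by (cases k; cases k') (auto simp: is_abs_def)

lemma homogeneousD: "homogeneous lab R \<Longrightarrow> (n, m) \<in> R \<Longrightarrow> homog_kind (lab n) (lab m)"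
  unfolding homogeneous_def by blast

lemma homogeneousI: "(\<And>n m. (n, m) \<in> R \<Longrightarrow> homog_kind (lab n) (lab m)) \<Longrightarrow> homogeneous lab R"
  unfolding homogeneous_def by blast

lemma homogeneous_converse: "homogeneous lab R \<Longrightarrow> homogeneous lab (R\<inverse>)"
  by (rule homogeneousI) (metis converse_iff homog_kind_sym homogeneousD)

lemma propagated_converse: "propagated lab R \<Longrightarrow> propagated lab (R\<inverse>)"
  unfolding propagated_def converse_iff by blast

lemma propagatedD:
  assumes "propagated lab R" and "(k, k') \<in> R"
  shows "lab k = App n1 n2 \<Longrightarrow> lab k' = App m1 m2 \<Longrightarrow> (n1, m1) \<in> R \<and> (n2, m2) \<in> R"
    and "lab k = Abs n \<Longrightarrow> lab k' = Abs m \<Longrightarrow> (n, m) \<in> R"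
  using assms unfolding propagated_def by blast+

lemma propagated_child:
  assumes H: "homogeneous lab R" and P: "propagated lab R" and kk': "(k, k') \<in> R"
    and m: "child (lab k) d m"
  shows "\<exists>m'. child (lab k') d m' \<and> (m, m') \<in> R"
proof -
  have "homog_kind (lab k) (lab k')" using homogeneousD[OF H kk'] .
  then obtain m' where m': "child (lab k') d m'" using homog_kind_child[OF _ m] by blast
  have "(m, m') \<in> R"
    using propagatedD[OF P kk'] m m' by (cases "lab k"; cases "lab k'"; cases d) auto
  with m' show ?thesis by blast
qed

lemma propagated_path:
  assumes H: "homogeneous lab R" and P: "propagated lab R" and nn': "(n, n') \<in> R"
    and "path lab n \<tau> m"
  shows "\<exists>m'. path lab n' \<tau> m' \<and> (m, m') \<in> R"
  using assms(4)
proof (induction \<tau> arbitrary: m)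
  case Nil
  then show ?case using nn' by simp
next
  case (Cons d \<tau>)
  from Cons.prems obtain k where k: "path lab n \<tau> k" "child (lab k) d m"
    unfolding path_Cons_iff by blast
  obtain k' where k': "path lab n' \<tau> k'" "(k, k') \<in> R" using Cons.IH[OF k(1)] by blast
  obtain m' where m': "child (lab k') d m'" "(m, m') \<in> R"
    using propagated_child[OF H P k'(2) k(2)] by blast
  have "path lab n' (d # \<tau>) m'" unfolding path_Cons_iff using k'(1) m'(1) by blast
  with m'(2) show ?case by blast
qed

lemma propagated_common_path:
  assumes "homogeneous lab R" and "propagated lab R" and "(n, n') \<in> R"
    and "path lab n \<tau> m" and "path lab n' \<tau> m'"
  shows "(m, m') \<in> R"
  using propagated_path[OF assms(1-4)] assms(5) path_functional by metis

text \<open>If \<open>x\<close> and \<open>y\<close> are both related to \<open>z\<close> and \<open>x\<close> reaches \<open>y\<close> along \<open>\<sigma>\<close>, transferring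
  that path back and forth through \<open>z\<close> lets \<open>y\<close> reach a node in the same situation, so
  \<open>\<sigma>\<close> can be iterated from \<open>y\<close> forever, contradicting acyclicity.\<close>

lemma propagated_siblings_no_path:
  assumes G: "lambda_graph N lab" and H: "homogeneous lab R" and P: "propagated lab R"
    and zx: "(z, x) \<in> R" and zy: "(z, y) \<in> R" and xy: "path lab x \<sigma> y" and ne: "\<sigma> \<noteq> []"
    and y: "y \<in> N"
  shows False
proof -
  define J where "J v w \<longleftrightarrow> (\<exists>c. (c, v) \<in> R \<and> (c, w) \<in> R) \<and> path lab v \<sigma> w" for v w
  have J_step: "\<exists>w'. J w w'" if "J v w" for v w
  proof -
    from that obtain c where c: "(c, v) \<in> R" "(c, w) \<in> R" and vw: "path lab v \<sigma> w"
      unfolding J_def by blast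
    obtain c' where c': "path lab c \<sigma> c'" "(c', w) \<in> R"
      using propagated_path[OF homogeneous_converse[OF H] propagated_converse[OF P] _ vw] c(1)
      by blast
    obtain w' where "path lab w \<sigma> w'" "(c', w') \<in> R"
      using propagated_path[OF H P c(2) c'(1)] by blast
    then show ?thesis using c'(2) unfolding J_def by blast
  qed
  have "\<exists>w w'. path lab y (concat (replicate k \<sigma>)) w \<and> J w w'" for k
  proof (induction k)
    case 0
    have "J x y" unfolding J_def using zx zy xy by blast
    then obtain w' where "J y w'" using J_step by blast
    moreover have "path lab y (concat (replicate 0 \<sigma>)) y" by simp
    ultimately show ?case by blast
  next
    case (Suc k)
    then obtain w w' where w: "path lab y (concat (replicate k \<sigma>)) w" "J w w'" by blast
    have "path lab w \<sigma> w'" using w(2) unfolding J_def by blast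
    then have "path lab y (concat (replicate (Suc k) \<sigma>)) w'"
      using path_append_iff[THEN iffD2, OF exI, OF conjI[OF w(1)]] by simp
    moreover obtain w'' where "J w' w''" using J_step[OF w(2)] by blast
    ultimately show ?case by blast
  qed
  then obtain w where "path lab y (concat (replicate (card N) \<sigma>)) w" by blast
  then have "length (concat (replicate (card N) \<sigma>)) < card N"
    using path_length_less_card[OF G y] by blast
  moreover have "length (concat (replicate (card N) \<sigma>)) = card N * length \<sigma>"
    by (simp add: length_concat sum_list_replicate)
  moreover have "card N \<le> card N * length \<sigma>" using ne by (cases \<sigma>) auto
  ultimately show False by linarith
qed

lemma propagated_binder_not_below:
  assumes G: "lambda_graph N lab" and H: "homogeneous lab R" and P: "propagated lab R"
    and rr': "(r, r') \<in> R" and ll': "(l, l') \<in> R" and r': "r' \<in> N"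
    and l: "path lab r \<rho> l" and l': "path lab r' (us @ \<rho>) l'" and ne: "us \<noteq> []"
  shows False
proof -
  obtain b where b: "path lab r' \<rho> b" "path lab b us l'" using l' unfolding path_append_iff by blast
  have "(l, b) \<in> R" using propagated_common_path[OF H P rr' l b(1)] .
  moreover have "l' \<in> N" using path_in_carrier[OF lambda_graph_pre[OF G] r' l'] .
  ultimately show False using propagated_siblings_no_path[OF G H P _ ll' b(2) ne] by blast
qed

lemma propagated_binders_same_position:
  assumes G: "lambda_graph N lab" and H: "homogeneous lab R" and P: "propagated lab R"
    and rr': "(r, r') \<in> R" and r: "r \<in> N" and r': "r' \<in> N" and ll': "(l, l') \<in> R"
    and l: "path lab r \<rho> l" and l': "path lab r' \<rho>' l'"
    and "suffix \<rho> \<tau>" and "suffix \<rho>' \<tau>"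
  shows "\<rho> = \<rho>'"
  using suffix_same_cases[OF assms(10,11)]
proof
  assume "suffix \<rho> \<rho>'"
  then obtain us where us: "\<rho>' = us @ \<rho>" unfolding suffix_def by blast
  show ?thesis
  proof (cases "us = []")
    case False
    then show ?thesis using propagated_binder_not_below[OF G H P rr' ll' r' l] l' us by blast
  qed (use us in simp)
next
  assume "suffix \<rho>' \<rho>"
  then obtain us where us: "\<rho> = us @ \<rho>'" unfolding suffix_def by blast
  show ?thesis
  proof (cases "us = []")
    case False
    have "(r', r) \<in> R\<inverse>" and "(l', l) \<in> R\<inverse>" using rr' ll' by simp_all
    then show ?thesis
      using propagated_binder_not_below[OF G homogeneous_converse[OF H] propagated_converse[OF P]
          _ _ r l'] l us False by blast
  qed (use us in simp)
qed

section \<open>De Bruijn indices as abstraction counts\<close>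

definition abs_at :: "('n \<Rightarrow> ('n, 'a) kind) \<Rightarrow> 'n \<Rightarrow> trace \<Rightarrow> bool" where
  "abs_at lab r \<tau> \<longleftrightarrow> (\<exists>x. path lab r \<tau> x \<and> is_abs (lab x))"

text \<open>\<open>count_hits P \<rho> \<sigma>\<close> counts the traces \<open>\<tau>\<close> satisfying \<open>P\<close> with \<open>\<rho>\<close> a proper suffix
  of \<open>\<tau>\<close> and \<open>\<tau>\<close> a suffix of \<open>\<sigma> @ \<rho>\<close>.\<close>

fun count_hits :: "(trace \<Rightarrow> bool) \<Rightarrow> trace \<Rightarrow> trace \<Rightarrow> nat" where
  "count_hits P \<rho> [] = 0"
| "count_hits P \<rho> (d # \<sigma>) = (if P (d # \<sigma> @ \<rho>) then Suc (count_hits P \<rho> \<sigma>) else count_hits P \<rho> \<sigma>)"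

lemma count_hits_append: "count_hits P \<rho> (\<sigma> @ us) = count_hits P (us @ \<rho>) \<sigma> + count_hits P \<rho> us"
  by (induction \<sigma>) auto

lemma count_hits_less: "P (us @ \<rho>) \<Longrightarrow> us \<noteq> [] \<Longrightarrow> count_hits P (us @ \<rho>) \<sigma> < count_hits P \<rho> (\<sigma> @ us)"
  by (cases us) (auto simp: count_hits_append)

lemma idx_eq_count_hits:
  assumes G: "lambda_graph N lab" and r: "r \<in> N" and l: "path lab r \<rho> l"
  shows "idx lab l r (\<sigma> @ \<rho>) = count_hits (abs_at lab r) \<rho> \<sigma>"
proof (induction \<sigma>)
  case Nil
  show ?case using l by (cases \<rho>) auto
next
  case (Cons d \<sigma>)
  have "\<not> path lab r ((d # \<sigma>) @ \<rho>) l"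
  proof
    assume "path lab r ((d # \<sigma>) @ \<rho>) l"
    then obtain x where "path lab r \<rho> x" "path lab x (d # \<sigma>) l" unfolding path_append_iff by blast
    then have "path lab l (d # \<sigma>) l" using path_functional[OF l] by blast
    then show False
      using lambda_graph_acyclic[OF G path_in_carrier[OF lambda_graph_pre[OF G] r l]] by blast
  qed
  then show ?case using Cons.IH by (simp add: abs_at_def)
qed

lemma idx_eq_iff_same_binder_position:
  assumes G: "lambda_graph N lab" and r: "r \<in> N" and r': "r' \<in> N"
    and A: "abs_at lab r = abs_at lab r'"
    and l: "path lab r \<rho> l" "is_abs (lab l)" and l': "path lab r' \<rho>' l'" "is_abs (lab l')"
    and \<rho>: "suffix \<rho> \<tau>" and \<rho>': "suffix \<rho>' \<tau>"
  shows "idx lab l r \<tau> = idx lab l' r' \<tau> \<longleftrightarrow> \<rho> = \<rho>'"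
proof -
  obtain \<sigma> \<sigma>' where \<tau>: "\<tau> = \<sigma> @ \<rho>" "\<tau> = \<sigma>' @ \<rho>'" using \<rho> \<rho>' unfolding suffix_def by blast
  have idx: "idx lab l r \<tau> = count_hits (abs_at lab r) \<rho> \<sigma>"
    "idx lab l' r' \<tau> = count_hits (abs_at lab r) \<rho>' \<sigma>'"
    using idx_eq_count_hits[OF G r l(1), of \<sigma>] idx_eq_count_hits[OF G r' l'(1), of \<sigma>'] \<tau> A
    by simp_all
  have hit: "abs_at lab r \<rho>" "abs_at lab r \<rho>'"
    using l l' fun_cong[OF A, of \<rho>'] unfolding abs_at_def by blast+
  have "idx lab l r \<tau> \<noteq> idx lab l' r' \<tau>" if "\<rho> \<noteq> \<rho>'"
    using suffix_same_cases[OF \<rho> \<rho>']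
  proof
    assume "suffix \<rho> \<rho>'"
    then obtain us where us: "\<rho>' = us @ \<rho>" unfolding suffix_def by blast
    with that have "us \<noteq> []" by auto
    have "\<sigma> = \<sigma>' @ us" using \<tau> us(1) by simp
    then have "idx lab l' r' \<tau> < idx lab l r \<tau>"
      unfolding idx us
      using count_hits_less[of "abs_at lab r" us \<rho> \<sigma>', OF hit(2)[unfolded us(1)] \<open>us \<noteq> []\<close>]
      by simp
    then show ?thesis by simp
  next
    assume "suffix \<rho>' \<rho>"
    then obtain us where us: "\<rho> = us @ \<rho>'" unfolding suffix_def by blast
    with that have "us \<noteq> []" by auto
    have "\<sigma>' = \<sigma> @ us" using \<tau> us(1) by simp
    then have "idx lab l r \<tau> < idx lab l' r' \<tau>"
      unfolding idx us
      using count_hits_less[of "abs_at lab r" us \<rho>' \<sigma>, OF hit(1)[unfolded us(1)] \<open>us \<noteq> []\<close>]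
      by simp
    then show ?thesis by simp
  qed
  moreover have "\<sigma> = \<sigma>'" if "\<rho> = \<rho>'" using \<tau> that by simp
  ultimately show ?thesis using idx by metis
qed

lemma abs_at_transfer:
  assumes "\<And>x. path lab r \<tau> x \<Longrightarrow> \<exists>y. path lab r' \<tau> y \<and> homog_kind (lab x) (lab y)"
    and "abs_at lab r \<tau>"
  shows "abs_at lab r' \<tau>"
  using assms(2) unfolding abs_at_def
proof (elim exE conjE)
  fix x assume "path lab r \<tau> x" and "is_abs (lab x)"
  then show "\<exists>y. path lab r' \<tau> y \<and> is_abs (lab y)" using assms(1) homog_kind_is_abs by blast
qed

lemma propagated_abs_at_eq:
  assumes H: "homogeneous lab R" and P: "propagated lab R" and rr': "(r, r') \<in> R"
  shows "abs_at lab r = abs_at lab r'"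
proof
  fix \<tau>
  have "\<exists>y. path lab r' \<tau> y \<and> homog_kind (lab x) (lab y)" if "path lab r \<tau> x" for x
    using propagated_path[OF H P rr' that] homogeneousD[OF H] by blast
  moreover have "\<exists>x. path lab r \<tau> x \<and> homog_kind (lab y) (lab x)" if "path lab r' \<tau> y" for y
    using propagated_path[OF homogeneous_converse[OF H] propagated_converse[OF P] _ that] rr'
      homogeneousD[OF homogeneous_converse[OF H]] by blast
  ultimately show "abs_at lab r \<tau> = abs_at lab r' \<tau>" using abs_at_transfer by metis
qed

lemma propagated_binders_same_idx:
  assumes G: "lambda_graph N lab" and H: "homogeneous lab R" and P: "propagated lab R"
    and rr': "(r, r') \<in> R" and r: "is_root N lab r" and r': "is_root N lab r'"
    and n: "path lab r \<tau> n" "lab n = BVar l" and m: "path lab r' \<tau> m" "lab m = BVar l'"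
    and ll': "(l, l') \<in> R"
  shows "idx lab l r \<tau> = idx lab l' r' \<tau>"
proof -
  have rN: "r \<in> N" "r' \<in> N" using root_in_carrier[OF r] root_in_carrier[OF r'] .
  obtain \<rho> where \<rho>: "suffix \<rho> \<tau>" "path lab r \<rho> l" using binder_on_path[OF G r n] by blast
  obtain \<rho>' where \<rho>': "suffix \<rho>' \<tau>" "path lab r' \<rho>' l'" using binder_on_path[OF G r' m] by blast
  have "\<rho> = \<rho>'"
    using propagated_binders_same_position[OF G H P rr' rN ll' \<rho>(2) \<rho>'(2) \<rho>(1) \<rho>'(1)] .
  moreover have "is_abs (lab l)" "is_abs (lab l')"
    using binder_is_abs[OF G root_path_in_carrier[OF G r n(1)] n(2)]
      binder_is_abs[OF G root_path_in_carrier[OF G r' m(1)] m(2)] .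
  ultimately show ?thesis
    using idx_eq_iff_same_binder_position[OF G rN propagated_abs_at_eq[OF H P rr']
        \<rho>(2) _ \<rho>'(2) _ \<rho>(1) \<rho>'(1)]
    by blast
qed

lemma rb_at_BVar: "rb lab r \<tau> t \<Longrightarrow> path lab r \<tau> n \<Longrightarrow> lab n = BVar l \<Longrightarrow> t = BV (idx lab l r \<tau>)"
  by (erule rb.cases) (auto dest: path_functional)

lemma rb_at_FVar: "rb lab r \<tau> t \<Longrightarrow> path lab r \<tau> n \<Longrightarrow> lab n = FVar a \<Longrightarrow> t = FV a"
  by (erule rb.cases) (auto dest: path_functional)

lemma rb_at_Abs: "rb lab r \<tau> t \<Longrightarrow> path lab r \<tau> n \<Longrightarrow> lab n = Abs m \<Longrightarrow>
    \<exists>t'. t = Lam t' \<and> rb lab r (DD # \<tau>) t'"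
  by (erule rb.cases) (auto dest: path_functional)

lemma rb_at_App: "rb lab r \<tau> t \<Longrightarrow> path lab r \<tau> n \<Longrightarrow> lab n = App n1 n2 \<Longrightarrow>
    \<exists>t1 t2. t = Ap t1 t2 \<and> rb lab r (DL # \<tau>) t1 \<and> rb lab r (DR # \<tau>) t2"
  by (erule rb.cases) (auto dest: path_functional)

lemma rb_functional: "rb lab r \<tau> t \<Longrightarrow> rb lab r \<tau> t' \<Longrightarrow> t = t'"
proof (induction arbitrary: t' rule: rb.induct)
  case (rb_bvar r \<tau> n l) then show ?case using rb_at_BVar by metis
next
  case (rb_fvar r \<tau> n a) then show ?case using rb_at_FVar by metis
next
  case (rb_abs r \<tau> n m t) then show ?case using rb_at_Abs by metis
next
  case (rb_app r \<tau> n n1 n2 t1 t2) then show ?case using rb_at_App by metis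
qed

lemma rb_exists:
  assumes G: "lambda_graph N lab" and r: "r \<in> N" and "path lab r \<tau> n"
  shows "\<exists>t. rb lab r \<tau> t"
  using assms(3)
proof (induction "card N - length \<tau>" arbitrary: \<tau> n rule: less_induct)
  case less
  have IH: "\<exists>t. rb lab r (d # \<tau>) t" if "path lab r (d # \<tau>) m" for d m
    using less.hyps[OF _ that] path_length_less_card[OF G r that] by simp
  show ?case
  proof (cases "lab n")
    case (App n1 n2)
    have "path lab r (DL # \<tau>) n1" "path lab r (DR # \<tau>) n2"
      using path_appL[OF less.prems App] path_appR[OF less.prems App] .
    then show ?thesis using rb_app[OF less.prems App] IH by blast
  next
    case (Abs m)
    have "path lab r (DD # \<tau>) m" using path_abs[OF less.prems Abs] .
    then show ?thesis using rb_abs[OF less.prems Abs] IH by blast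
  next
    case (FVar a)
    then show ?thesis using rb_fvar[OF less.prems] by blast
  next
    case (BVar l)
    then show ?thesis using rb_bvar[OF less.prems] by blast
  qed
qed

lemma rb_readback_iff:
  assumes "lambda_graph N lab" and "r \<in> N"
  shows "rb lab r [] t \<longleftrightarrow> t = readback lab r"
proof -
  obtain t0 where t0: "rb lab r [] t0" using rb_exists[OF assms path_eps] by blast
  then have "readback lab r = t0"
    unfolding readback_def by (rule the_equality) (rule rb_functional[OF _ t0])
  then show ?thesis using t0 rb_functional by metis
qed

fun head_matches :: "('n, 'a) kind \<Rightarrow> 'a lnterm \<Rightarrow> bool" where
  "head_matches (App _ _) (Ap _ _) = True"
| "head_matches (Abs _) (Lam _) = True"
| "head_matches (FVar _) (FV _) = True"
| "head_matches (BVar _) (BV _) = True"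
| "head_matches _ _ = False"

lemma rb_head_matches:
  assumes "rb lab r \<tau> u" and "path lab r \<tau> n"
  shows "head_matches (lab n) u"
  using assms(1) by cases (use assms(2) in \<open>metis head_matches.simps(1-4) path_functional\<close>)+

lemma head_matches_homog_kind: "head_matches k u \<Longrightarrow> head_matches k' u \<Longrightarrow> homog_kind k k'"
  by (cases k; cases k'; cases u) auto

lemma rb_homog_kind:
  "rb lab r \<tau> u \<Longrightarrow> rb lab r' \<tau> u \<Longrightarrow> path lab r \<tau> n \<Longrightarrow> path lab r' \<tau> n' \<Longrightarrow>
    homog_kind (lab n) (lab n')"
  using rb_head_matches head_matches_homog_kind by metis

fun subterm :: "dir \<Rightarrow> 'a lnterm \<Rightarrow> 'a lnterm" where
  "subterm DL (Ap t1 t2) = t1"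
| "subterm DR (Ap t1 t2) = t2"
| "subterm DD (Lam t) = t"
| "subterm _ t = t"

lemma rb_child:
  assumes "rb lab r \<tau> u" and "path lab r \<tau> k" and "child (lab k) d m"
  shows "rb lab r (d # \<tau>) (subterm d u)"
proof (cases "lab k")
  case (App n1 n2)
  then show ?thesis using rb_at_App[OF assms(1,2) App] assms(3) by (cases d) auto
next
  case (Abs n)
  then show ?thesis using rb_at_Abs[OF assms(1,2) Abs] assms(3) by (cases d) auto
qed (use assms(3) in auto)

lemma rb_common_path:
  assumes t: "rb lab r [] t" and t': "rb lab r' [] t" and "path lab r \<tau> x"
  shows "\<exists>y u. path lab r' \<tau> y \<and> rb lab r \<tau> u \<and> rb lab r' \<tau> u"
  using assms(3)
proof (induction \<tau> arbitrary: x)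
  case Nil
  then show ?case using t t' by auto
next
  case (Cons d \<tau>)
  from Cons.prems obtain k where k: "path lab r \<tau> k" "child (lab k) d x"
    unfolding path_Cons_iff by blast
  obtain y u where y: "path lab r' \<tau> y" and u: "rb lab r \<tau> u" "rb lab r' \<tau> u"
    using Cons.IH[OF k(1)] by blast
  have "homog_kind (lab k) (lab y)" using rb_homog_kind[OF u k(1) y] .
  then obtain y' where y': "child (lab y) d y'" using homog_kind_child[OF _ k(2)] by blast
  have "path lab r' (d # \<tau>) y'" unfolding path_Cons_iff using y y' by blast
  moreover have "rb lab r (d # \<tau>) (subterm d u)" using rb_child[OF u(1) k] .
  moreover have "rb lab r' (d # \<tau>) (subterm d u)" using rb_child[OF u(2) y y'] .
  ultimately show ?case by blast
qed

lemma rb_abs_at_eq: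
  assumes t: "rb lab r [] t" and t': "rb lab r' [] t"
  shows "abs_at lab r = abs_at lab r'"
proof
  fix \<tau>
  have transfer: "\<exists>y. path lab s' \<tau> y \<and> homog_kind (lab x) (lab y)"
    if h: "rb lab s [] t" "rb lab s' [] t" "path lab s \<tau> x" for s s' x
  proof -
    obtain y u where y: "path lab s' \<tau> y" and u: "rb lab s \<tau> u" "rb lab s' \<tau> u"
      using rb_common_path[OF h] by blast
    show ?thesis using rb_homog_kind[OF u h(3) y] y by blast
  qed
  have "abs_at lab r \<tau> \<Longrightarrow> abs_at lab r' \<tau>"
    by (rule abs_at_transfer) (rule transfer[OF t t'])
  moreover have "abs_at lab r' \<tau> \<Longrightarrow> abs_at lab r \<tau>"
    by (rule abs_at_transfer) (rule transfer[OF t' t])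
  ultimately show "abs_at lab r \<tau> = abs_at lab r' \<tau>" by blast
qed

section \<open>Open bisimulations and equal readbacks\<close>

lemma open_bisimulation_rb_transfer:
  assumes G: "lambda_graph N lab" and B: "bisimulation lab R" and O: "open_rel lab R"
    and "rb lab r \<tau> t" and "(r, r') \<in> R" and "is_root N lab r" and r': "is_root N lab r'"
  shows "rb lab r' \<tau> t"
proof -
  have H: "homogeneous lab R" and P: "propagated lab R" using B unfolding bisimulation_def by blast+
  show ?thesis
    using assms(4-6)
  proof (induction rule: rb.induct)
    case (rb_bvar r \<tau> n l)
    obtain m where m: "path lab r' \<tau> m" "(n, m) \<in> R"
      using propagated_path[OF H P rb_bvar.prems(1) rb_bvar.hyps(1)] by blast
    then obtain l' where l': "lab m = BVar l'"
      using homogeneousD[OF H m(2)] rb_bvar.hyps(2) by (cases "lab m") auto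
    have ll': "(l, l') \<in> R" using B m(2) rb_bvar.hyps(2) l' unfolding bisimulation_def by blast
    have "idx lab l r \<tau> = idx lab l' r' \<tau>"
      using propagated_binders_same_idx[OF G H P rb_bvar.prems(1,2) r' rb_bvar.hyps m(1) l' ll'] .
    then show ?case using rb.rb_bvar[OF m(1) l'] by simp
  next
    case (rb_fvar r \<tau> n a)
    obtain m where m: "path lab r' \<tau> m" "(n, m) \<in> R"
      using propagated_path[OF H P rb_fvar.prems(1) rb_fvar.hyps(1)] by blast
    then obtain b where b: "lab m = FVar b"
      using homogeneousD[OF H m(2)] rb_fvar.hyps(2) by (cases "lab m") auto
    then have "n = m" using O m(2) rb_fvar.hyps(2) unfolding open_rel_def by blast
    then show ?case using rb.rb_fvar[OF m(1) b] b rb_fvar.hyps(2) by simp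
  next
    case (rb_abs r \<tau> n k t)
    obtain m where m: "path lab r' \<tau> m" "(n, m) \<in> R"
      using propagated_path[OF H P rb_abs.prems(1) rb_abs.hyps(1)] by blast
    then obtain k' where "lab m = Abs k'"
      using homogeneousD[OF H m(2)] rb_abs.hyps(2) by (cases "lab m") auto
    then show ?case using rb.rb_abs[OF m(1)] rb_abs.IH rb_abs.prems by blast
  next
    case (rb_app r \<tau> n n1 n2 t1 t2)
    obtain m where m: "path lab r' \<tau> m" "(n, m) \<in> R"
      using propagated_path[OF H P rb_app.prems(1) rb_app.hyps(1)] by blast
    then obtain m1 m2 where "lab m = App m1 m2"
      using homogeneousD[OF H m(2)] rb_app.hyps(2) by (cases "lab m") auto
    then show ?case using rb.rb_app[OF m(1)] rb_app.IH rb_app.prems by blast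
  qed
qed

lemma readback_eq_if_open_bisimulation:
  assumes G: "lambda_graph N lab" and B: "bisimulation lab R" and O: "open_rel lab R"
    and "(r, r') \<in> R" and r: "is_root N lab r" and r': "is_root N lab r'"
  shows "readback lab r = readback lab r'"
proof -
  have "rb lab r [] (readback lab r)" using rb_readback_iff[OF G root_in_carrier[OF r]] by simp
  then have "rb lab r' [] (readback lab r)"
    by (rule open_bisimulation_rb_transfer[OF G B O _ assms(4-6)])
  then show ?thesis using rb_readback_iff[OF G root_in_carrier[OF r']] by simp
qed

lemma propagation_child:
  assumes "(k, k') \<in> propagation lab Q" and "child (lab k) d m" and "child (lab k') d m'"
  shows "(m, m') \<in> propagation lab Q"
proof (cases d)
  case DL
  then obtain n2 m2 where "lab k = App m n2" "lab k' = App m' m2"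
    using assms(2,3) by (cases "lab k"; cases "lab k'") auto
  then show ?thesis by (rule propagation.prop_L[OF assms(1)])
next
  case DR
  then obtain n1 m1 where "lab k = App n1 m" "lab k' = App m1 m'"
    using assms(2,3) by (cases "lab k"; cases "lab k'") auto
  then show ?thesis by (rule propagation.prop_R[OF assms(1)])
next
  case DD
  then have "lab k = Abs m" "lab k' = Abs m'"
    using assms(2,3) by (cases "lab k"; cases "lab k'"; simp)+
  then show ?thesis by (rule propagation.prop_D[OF assms(1)])
qed

lemma propagation_iff:
  "(n, m) \<in> propagation lab Q \<longleftrightarrow> (\<exists>r r' \<tau>. (r, r') \<in> Q \<and> path lab r \<tau> n \<and> path lab r' \<tau> m)"
proof
  assume "(n, m) \<in> propagation lab Q"
  then show "\<exists>r r' \<tau>. (r, r') \<in> Q \<and> path lab r \<tau> n \<and> path lab r' \<tau> m"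
  proof (induction rule: propagation.induct)
    case (prop_base n m)
    then show ?case by (intro exI[of _ n] exI[of _ m] exI[of _ "[]"]) simp
  next
    case (prop_L n m n1 n2 m1 m2)
    then obtain r r' \<tau> where "(r, r') \<in> Q" and p: "path lab r \<tau> n" "path lab r' \<tau> m" by blast
    then show ?case
      using path_appL[OF p(1) prop_L.hyps(2)] path_appL[OF p(2) prop_L.hyps(3)]
      by (intro exI[of _ r] exI[of _ r'] exI[of _ "DL # \<tau>"]) simp
  next
    case (prop_R n m n1 n2 m1 m2)
    then obtain r r' \<tau> where "(r, r') \<in> Q" and p: "path lab r \<tau> n" "path lab r' \<tau> m" by blast
    then show ?case
      using path_appR[OF p(1) prop_R.hyps(2)] path_appR[OF p(2) prop_R.hyps(3)]
      by (intro exI[of _ r] exI[of _ r'] exI[of _ "DR # \<tau>"]) simp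
  next
    case (prop_D n m n' m')
    then obtain r r' \<tau> where "(r, r') \<in> Q" and p: "path lab r \<tau> n" "path lab r' \<tau> m" by blast
    then show ?case
      using path_abs[OF p(1) prop_D.hyps(2)] path_abs[OF p(2) prop_D.hyps(3)]
      by (intro exI[of _ r] exI[of _ r'] exI[of _ "DD # \<tau>"]) simp
  qed
next
  assume "\<exists>r r' \<tau>. (r, r') \<in> Q \<and> path lab r \<tau> n \<and> path lab r' \<tau> m"
  then obtain r r' \<tau> where rr': "(r, r') \<in> Q" and "path lab r \<tau> n" "path lab r' \<tau> m" by blast
  then show "(n, m) \<in> propagation lab Q"
  proof (induction \<tau> arbitrary: n m)
    case Nil
    then show ?case using propagation.prop_base by simp
  next
    case (Cons d \<tau>)
    obtain k k' where k: "path lab r \<tau> k" "child (lab k) d n"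
      and k': "path lab r' \<tau> k'" "child (lab k') d m"
      using Cons.prems(2,3) unfolding path_Cons_iff by blast
    show ?case using propagation_child[OF Cons.IH[OF rr' k(1) k'(1)] k(2) k'(2)] .
  qed
qed

lemma propagated_propagation: "propagated lab (propagation lab Q)"
  unfolding propagated_def
  by (intro conjI allI impI; elim conjE) (meson propagation.intros(2-4))+

lemma propagation_readback_witness:
  assumes G: "lambda_graph N lab" and Q: "is_query N lab Q"
    and eq: "\<forall>n m. (n, m) \<in> Q \<longrightarrow> readback lab n = readback lab m"
    and nm: "(n, m) \<in> propagation lab Q"
  obtains r r' \<tau> u where "(r, r') \<in> Q" and "is_root N lab r" and "is_root N lab r'"
    and "path lab r \<tau> n" and "path lab r' \<tau> m" and "rb lab r \<tau> u" and "rb lab r' \<tau> u"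
    and "abs_at lab r = abs_at lab r'"
proof -
  obtain r r' \<tau> where rr': "(r, r') \<in> Q" and n: "path lab r \<tau> n" and m: "path lab r' \<tau> m"
    using nm unfolding propagation_iff by blast
  have roots: "is_root N lab r" "is_root N lab r'" using Q rr' unfolding is_query_def by auto
  have "r \<in> N" "r' \<in> N" using root_in_carrier[OF roots(1)] root_in_carrier[OF roots(2)] .
  moreover have "readback lab r' = readback lab r" using eq rr' by simp
  ultimately have t: "rb lab r [] (readback lab r)" "rb lab r' [] (readback lab r)"
    using rb_readback_iff[OF G] by metis+
  obtain y u where "path lab r' \<tau> y" and u: "rb lab r \<tau> u" "rb lab r' \<tau> u"
    using rb_common_path[OF t n] by blast
  show ?thesis using that[OF rr' roots n m u rb_abs_at_eq[OF t]] .
qed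

lemma open_propagation_if_readback_eq:
  assumes G: "lambda_graph N lab" and Q: "is_query N lab Q"
    and eq: "\<forall>n m. (n, m) \<in> Q \<longrightarrow> readback lab n = readback lab m"
  shows "open_rel lab (propagation lab Q)"
  unfolding open_rel_def
proof (intro allI impI, elim conjE)
  fix n m a b
  assume nm: "(n, m) \<in> propagation lab Q" and a: "lab n = FVar a" and b: "lab m = FVar b"
  obtain r r' \<tau> u where r: "is_root N lab r" "path lab r \<tau> n" "rb lab r \<tau> u"
    and r': "is_root N lab r'" "path lab r' \<tau> m" "rb lab r' \<tau> u"
    using propagation_readback_witness[OF G Q eq nm] by metis
  have "FV a = FV b" using rb_at_FVar[OF r(3) r(2) a] rb_at_FVar[OF r'(3) r'(2) b] by simp
  then have "lab m = FVar a" using b by simp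
  then show "n = m"
    by (rule pre_lambda_graph_FVar_inj[OF lambda_graph_pre[OF G] root_path_in_carrier[OF G r(1,2)]
        root_path_in_carrier[OF G r'(1,2)] a])
qed

lemma homogeneous_propagation_if_readback_eq:
  assumes G: "lambda_graph N lab" and Q: "is_query N lab Q"
    and eq: "\<forall>n m. (n, m) \<in> Q \<longrightarrow> readback lab n = readback lab m"
  shows "homogeneous lab (propagation lab Q)"
proof (rule homogeneousI)
  fix n m assume "(n, m) \<in> propagation lab Q"
  then obtain r r' \<tau> u where "rb lab r \<tau> u" "rb lab r' \<tau> u" "path lab r \<tau> n" "path lab r' \<tau> m"
    using propagation_readback_witness[OF G Q eq] by metis
  then show "homog_kind (lab n) (lab m)" by (rule rb_homog_kind)
qed

lemma propagation_binders_if_readback_eq: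
  assumes G: "lambda_graph N lab" and Q: "is_query N lab Q"
    and eq: "\<forall>n m. (n, m) \<in> Q \<longrightarrow> readback lab n = readback lab m"
    and nm: "(n, m) \<in> propagation lab Q" and l: "lab n = BVar l" and l': "lab m = BVar l'"
  shows "(l, l') \<in> propagation lab Q"
proof -
  obtain r r' \<tau> u where rr': "(r, r') \<in> Q" and A: "abs_at lab r = abs_at lab r'"
    and r: "is_root N lab r" "path lab r \<tau> n" "rb lab r \<tau> u"
    and r': "is_root N lab r'" "path lab r' \<tau> m" "rb lab r' \<tau> u"
    using propagation_readback_witness[OF G Q eq nm] by metis
  have idx: "idx lab l r \<tau> = idx lab l' r' \<tau>"
    using rb_at_BVar[OF r(3) r(2) l] rb_at_BVar[OF r'(3) r'(2) l'] by simp
  obtain \<rho> where \<rho>: "suffix \<rho> \<tau>" "path lab r \<rho> l" using binder_on_path[OF G r(1,2) l] by blast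
  obtain \<rho>' where \<rho>': "suffix \<rho>' \<tau>" "path lab r' \<rho>' l'"
    using binder_on_path[OF G r'(1,2) l'] by blast
  have "is_abs (lab l)" "is_abs (lab l')"
    using binder_is_abs[OF G root_path_in_carrier[OF G r(1,2)] l]
      binder_is_abs[OF G root_path_in_carrier[OF G r'(1,2)] l'] .
  then have "\<rho> = \<rho>'"
    using idx_eq_iff_same_binder_position[OF G root_in_carrier[OF r(1)] root_in_carrier[OF r'(1)] A
        \<rho>(2) _ \<rho>'(2) _ \<rho>(1) \<rho>'(1)] idx by blast
  then show ?thesis unfolding propagation_iff using rr' \<rho>(2) \<rho>'(2) by blast
qed

lemma bisimulation_propagation_if_readback_eq:
  assumes G: "lambda_graph N lab" and Q: "is_query N lab Q"
    and eq: "\<forall>n m. (n, m) \<in> Q \<longrightarrow> readback lab n = readback lab m"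
  shows "bisimulation lab (propagation lab Q)"
  unfolding bisimulation_def
  using homogeneous_propagation_if_readback_eq[OF assms] propagated_propagation
    propagation_binders_if_readback_eq[OF assms] by blast

theorem mainTheorem19:
  fixes N :: "'n set" and lab :: "'n \<Rightarrow> ('n, 'a) kind" and Q :: "('n \<times> 'n) set"
  assumes "lambda_graph N lab"
    and "is_query N lab Q"
  shows "(open_rel lab (propagation lab Q) \<and> bisimulation lab (propagation lab Q))
     \<longleftrightarrow> (\<forall>n m. (n, m) \<in> Q \<longrightarrow> readback lab n = readback lab m)"
proof
  assume open_bisim: "open_rel lab (propagation lab Q) \<and> bisimulation lab (propagation lab Q)"
  show "\<forall>n m. (n, m) \<in> Q \<longrightarrow> readback lab n = readback lab m"
  proof (intro allI impI)
    fix n m assume nm: "(n, m) \<in> Q"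
    then have "is_root N lab n" "is_root N lab m" using assms(2) unfolding is_query_def by auto
    then show "readback lab n = readback lab m"
      using readback_eq_if_open_bisimulation[OF assms(1) _ _ propagation.prop_base[OF nm]]
        open_bisim by blast
  qed
next
  assume "\<forall>n m. (n, m) \<in> Q \<longrightarrow> readback lab n = readback lab m"
  then show "open_rel lab (propagation lab Q) \<and> bisimulation lab (propagation lab Q)"
    using open_propagation_if_readback_eq bisimulation_propagation_if_readback_eq assms by blast
qed

end
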